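(* Let $k\ge 1$ and $n$ be integers with $kn$ even, and let $H^*\in\mathcal H$ be any $k$-factor on $[n]$. Then for every integer $0\le t\le kn/2$, $$\left|\{H\in\mathcal H:\ |H\triangle H^*|=2t\}\right|\;\le\;\binom{kn/2}{t}\frac{(2t)!}{2^t\,t!}\;\le\;\binom{kn/2}{t}2^t\,t!\;\le\;(kn)^t\,e^{-t(t-1)/(kn)}.$$
   Context: A $k$-factor on $[n]$ is a $k$-regular simple graph with vertex set $[n]$, identified with its edge set; $\mathcal H$ denotes the set of all $k$-factors on $[n]$. $\triangle$ denotes symmetric difference of edge sets. *)

theory Defs
  imports Complex_Main
begin

definition all_edges :: "nat \<Rightarrow> nat set set" where
  "all_edges n = {e. e \<subseteq> {1..n} \<and> card e = 2}"

definition is_k_factor :: "nat \<Rightarrow> nat \<Rightarrow> nat set set \<Rightarrow> bool" where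
  "is_k_factor k n H \<longleftrightarrow> H \<subseteq> all_edges n \<and> (\<forall>v\<in>{1..n}. card {e\<in>H. v \<in> e} = k)"

definition k_factors :: "nat \<Rightarrow> nat \<Rightarrow> nat set set set" where
  "k_factors k n = {H. is_k_factor k n H}"

definition symdiff :: "'a set \<Rightarrow> 'a set \<Rightarrow> 'a set" where
  "symdiff A B = (A - B) \<union> (B - A)"

end

theory Submission
  imports Defs
begin

text \<open>Map \<open>H\<close> to the pair \<open>(H\<^sup>* - H, H - H\<^sup>*)\<close>. Since both graphs are \<open>k\<close>-regular, the removed
  set \<open>S = H\<^sup>* - H\<close> (a \<open>t\<close>-subset of \<open>H\<^sup>*\<close>) and the added set \<open>H - H\<^sup>*\<close> have the same degree
  at every vertex. A graph with prescribed degrees summing to \<open>2t\<close> is counted by pairing off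
  the edges at a fixed vertex \<open>v\<close> of positive degree: the other endpoint \<open>w\<close> has positive
  prescribed degree, leaving at most \<open>2t + 1\<close> choices, and deleting \<open>{v,w}\<close> reduces to degree
  sum \<open>2(t - 1)\<close>. Hence there are at most \<open>(2t-1)!! = (2t)!/(2\<^sup>t t!)\<close> such graphs. The last
  inequality writes \<open>binom (N/2) t 2\<^sup>t t!\<close> as \<open>\<Prod>i<t. (N - 2i)\<close> and uses \<open>1 + x \<le> e\<^sup>x\<close>.\<close>

definition degree :: "nat set set \<Rightarrow> nat \<Rightarrow> nat" where
  "degree G v = card {e\<in>G. v \<in> e}"

definition graphs_with_degrees :: "nat \<Rightarrow> (nat \<Rightarrow> nat) \<Rightarrow> nat set set set" where
  "graphs_with_degrees n d = {G. G \<subseteq> all_edges n \<and> (\<forall>v\<in>{1..n}. degree G v = d v)}"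

fun odd_double_fact :: "nat \<Rightarrow> nat" where
  "odd_double_fact 0 = 1"
| "odd_double_fact (Suc t) = (2 * t + 1) * odd_double_fact t"

lemma finite_all_edges: "finite (all_edges n)"
  unfolding all_edges_def by (rule finite_subset[of _ "Pow {1..n}"]) auto

lemma finite_graph: "G \<subseteq> all_edges n \<Longrightarrow> finite G"
  using finite_all_edges finite_subset by blast

lemma is_k_factor_iff_degree:
  "is_k_factor k n H \<longleftrightarrow> H \<subseteq> all_edges n \<and> (\<forall>v\<in>{1..n}. degree H v = k)"
  unfolding is_k_factor_def degree_def ..

lemma all_edges_obtain:
  assumes "e \<in> all_edges n" "v \<in> e"
  obtains w where "e = {v, w}" "w \<noteq> v" "v \<in> {1..n}" "w \<in> {1..n}"
proof -
  have "e \<subseteq> {1..n}" "card e = 2" using assms(1) unfolding all_edges_def by auto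
  obtain x y where xy: "e = {x, y}" "x \<noteq> y" using card_2_iff[THEN iffD1, OF \<open>card e = 2\<close>] by blast
  define w where "w = (if v = x then y else x)"
  have "e = {v, w}" "w \<noteq> v" using xy assms(2) unfolding w_def by auto
  then show ?thesis using that \<open>e \<subseteq> {1..n}\<close> by auto
qed

lemma degree_pos_iff: "finite G \<Longrightarrow> 0 < degree G v \<longleftrightarrow> (\<exists>e\<in>G. v \<in> e)"
  unfolding degree_def by (auto simp: card_gt_0_iff)

lemma handshake:
  assumes "G \<subseteq> all_edges n"
  shows "(\<Sum>v\<in>{1..n}. degree G v) = 2 * card G"
proof -
  have "(\<Sum>v\<in>{1..n}. degree G v) = (\<Sum>v\<in>{1..n}. \<Sum>e\<in>G. if v \<in> e then 1 else 0)"
    unfolding degree_def using finite_graph[OF assms]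
    by (auto simp: sum.If_cases intro!: sum.cong arg_cong[where f=card])
  also have "\<dots> = (\<Sum>e\<in>G. \<Sum>v\<in>{1..n}. if v \<in> e then 1 else 0)" by (rule sum.swap)
  also have "\<dots> = (\<Sum>e\<in>G. 2)"
  proof (rule sum.cong[OF refl])
    fix e assume "e \<in> G"
    then have "e \<subseteq> {1..n}" "card e = 2" using assms unfolding all_edges_def by auto
    then show "(\<Sum>v\<in>{1..n}. if v \<in> e then 1 else 0) = (2::nat)"
      by (simp add: sum.If_cases Int_absorb1)
  qed
  finally show ?thesis by simp
qed

lemma card_k_factor:
  assumes "H \<in> k_factors k n"
  shows "card H = k * n div 2"
proof -
  have E: "H \<subseteq> all_edges n" and deg: "\<forall>v\<in>{1..n}. degree H v = k"
    using assms unfolding k_factors_def is_k_factor_iff_degree by auto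
  have "k * n = 2 * card H" using handshake[OF E] deg by (simp add: mult.commute)
  then show ?thesis by simp
qed

lemma degree_Diff_singleton:
  assumes "finite G" "e \<in> G"
  shows "degree (G - {e}) u = degree G u - (if u \<in> e then 1 else 0)"
proof -
  have "{x\<in>G - {e}. u \<in> x} = {x\<in>G. u \<in> x} - {e}" by auto
  then show ?thesis unfolding degree_def using assms by (auto simp: card_Diff_singleton_if)
qed

lemma degree_Int_Diff:
  assumes "finite H"
  shows "degree H v = degree (H \<inter> K) v + degree (H - K) v"
proof -
  have "card {e\<in>H. v\<in>e} = card ({e\<in>H \<inter> K. v\<in>e} \<union> {e\<in>H - K. v\<in>e})"
    by (rule arg_cong[where f = card]) auto
  also have "\<dots> = card {e\<in>H \<inter> K. v\<in>e} + card {e\<in>H - K. v\<in>e}"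
    using assms by (intro card_Un_disjoint) auto
  finally show ?thesis unfolding degree_def .
qed

subsection \<open>Graphs with prescribed degrees\<close>

lemma finite_graphs_with_degrees: "finite (graphs_with_degrees n d)"
  unfolding graphs_with_degrees_def
  by (rule finite_subset[of _ "Pow (all_edges n)"]) (auto simp: finite_all_edges)

lemma graphs_with_degrees_zero:
  assumes "\<forall>v\<in>{1..n}. d v = 0"
  shows "graphs_with_degrees n d \<subseteq> {{}}"
proof
  fix G assume G: "G \<in> graphs_with_degrees n d"
  then have E: "G \<subseteq> all_edges n" and deg: "\<forall>v\<in>{1..n}. degree G v = d v"
    unfolding graphs_with_degrees_def by auto
  have "G = {}"
  proof (rule ccontr)
    assume "G \<noteq> {}"
    then obtain e where e: "e \<in> G" by blast
    then have "card e = 2" using E unfolding all_edges_def by auto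
    then obtain v where v: "v \<in> e" by (auto simp: card_2_iff)
    then have "v \<in> {1..n}" using E e unfolding all_edges_def by blast
    moreover have "0 < degree G v" using degree_pos_iff[OF finite_graph[OF E]] e v by blast
    ultimately show False using deg assms by simp
  qed
  then show "G \<in> {{}}" by simp
qed

lemma graphs_with_degrees_cover:
  assumes "v \<in> {1..n}" "0 < d v"
  shows "graphs_with_degrees n d
           \<subseteq> (\<Union>w\<in>{w\<in>{1..n}. w \<noteq> v \<and> 0 < d w}. {G\<in>graphs_with_degrees n d. {v, w} \<in> G})"
proof
  fix G assume G: "G \<in> graphs_with_degrees n d"
  then have E: "G \<subseteq> all_edges n" and deg: "\<forall>u\<in>{1..n}. degree G u = d u"
    unfolding graphs_with_degrees_def by auto
  note pos = degree_pos_iff[OF finite_graph[OF E]]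
  obtain e where e: "e \<in> G" "v \<in> e" using pos deg assms by metis
  then obtain w where w: "e = {v, w}" "w \<noteq> v" "w \<in> {1..n}"
    using all_edges_obtain E by blast
  have "0 < degree G w" using pos e w by auto
  then have "0 < d w" using deg w by simp
  then show "G \<in> (\<Union>w\<in>{w\<in>{1..n}. w \<noteq> v \<and> 0 < d w}. {G\<in>graphs_with_degrees n d. {v, w} \<in> G})"
    using G e w by blast
qed

lemma card_graphs_with_edge_le:
  assumes "v \<noteq> w" "v \<in> {1..n}" "w \<in> {1..n}"
  shows "card {G\<in>graphs_with_degrees n d. {v, w} \<in> G}
           \<le> card (graphs_with_degrees n (\<lambda>u. if u = v \<or> u = w then d u - 1 else d u))"
proof (rule card_inj_on_le[where f = "\<lambda>G. G - {{v, w}}"])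
  show "inj_on (\<lambda>G. G - {{v, w}}) {G\<in>graphs_with_degrees n d. {v, w} \<in> G}"
    by (rule inj_onI) (metis (no_types, lifting) insert_Diff mem_Collect_eq)
  show "(\<lambda>G. G - {{v, w}}) ` {G\<in>graphs_with_degrees n d. {v, w} \<in> G}
          \<subseteq> graphs_with_degrees n (\<lambda>u. if u = v \<or> u = w then d u - 1 else d u)"
  proof clarify
    fix G assume "G \<in> graphs_with_degrees n d" "{v, w} \<in> G"
    moreover from this have "finite G"
      unfolding graphs_with_degrees_def using finite_graph by blast
    ultimately show "G - {{v, w}} \<in> graphs_with_degrees n (\<lambda>u. if u = v \<or> u = w then d u - 1 else d u)"
      unfolding graphs_with_degrees_def by (auto simp: degree_Diff_singleton)
  qed
qed (rule finite_graphs_with_degrees)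

lemma card_graphs_with_degrees_le:
  assumes "(\<Sum>v\<in>{1..n}. d v) = 2 * t"
  shows "card (graphs_with_degrees n d) \<le> odd_double_fact t"
  using assms
proof (induction t arbitrary: d)
  case 0
  then have "graphs_with_degrees n d \<subseteq> {{}}" by (intro graphs_with_degrees_zero) simp
  then have "card (graphs_with_degrees n d) \<le> card {{}::nat set set}"
    using card_mono[of "{{}}" "graphs_with_degrees n d"] by simp
  then show ?case by simp
next
  case (Suc t)
  then have "(\<Sum>v\<in>{1..n}. d v) \<noteq> 0" by simp
  then obtain v where v: "v \<in> {1..n}" "0 < d v" by (metis gr0I sum.neutral)
  define W where "W = {w\<in>{1..n}. w \<noteq> v \<and> 0 < d w}"
  have "card W = (\<Sum>w\<in>W. 1)" by simp
  also have "\<dots> \<le> (\<Sum>w\<in>W. d w)" by (rule sum_mono) (simp add: W_def)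
  also have "\<dots> \<le> (\<Sum>w\<in>{1..n} - {v}. d w)" by (rule sum_mono2) (auto simp: W_def)
  also have "\<dots> = 2 * Suc t - d v" using v Suc.prems by (simp add: sum_diff1_nat)
  finally have card_W: "card W \<le> 2 * t + 1" using v by simp
  have edge: "card {G\<in>graphs_with_degrees n d. {v, w} \<in> G} \<le> odd_double_fact t" if "w \<in> W" for w
  proof -
    define d' where "d' = (\<lambda>u. if u = v \<or> u = w then d u - 1 else d u)"
    have "(\<Sum>u\<in>{1..n}. d u) = (\<Sum>u\<in>{1..n}. d' u + (if u \<in> {v, w} then 1 else 0))"
      using v that by (intro sum.cong) (auto simp: d'_def W_def)
    also have "\<dots> = (\<Sum>u\<in>{1..n}. d' u) + card {v, w}"
    proof -
      have "{1..n} \<inter> {u. u = v \<or> u = w} = {v, w}" using v that by (auto simp: W_def)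
      then show ?thesis by (simp add: sum.distrib sum.If_cases)
    qed
    also have "card {v, w} = 2" using that by (simp add: W_def)
    finally have "(\<Sum>u\<in>{1..n}. d' u) = 2 * t" using Suc.prems by simp
    then have "card (graphs_with_degrees n d') \<le> odd_double_fact t" by (rule Suc.IH)
    moreover have "card {G\<in>graphs_with_degrees n d. {v, w} \<in> G} \<le> card (graphs_with_degrees n d')"
      unfolding d'_def using v that by (intro card_graphs_with_edge_le) (auto simp: W_def)
    ultimately show ?thesis by linarith
  qed
  have "card (graphs_with_degrees n d)
          \<le> card (\<Union>w\<in>W. {G\<in>graphs_with_degrees n d. {v, w} \<in> G})"
    using graphs_with_degrees_cover[of v n d, OF v, folded W_def]
    by (rule card_mono[rotated]) (rule finite_subset[OF _ finite_graphs_with_degrees[of n d]], blast)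
  also have "\<dots> \<le> (\<Sum>w\<in>W. card {G\<in>graphs_with_degrees n d. {v, w} \<in> G})"
    by (rule card_UN_le) (simp add: W_def)
  also have "\<dots> \<le> card W * odd_double_fact t" using sum_mono[OF edge] by simp
  also have "\<dots> \<le> odd_double_fact (Suc t)" using mult_le_mono1[OF card_W] by simp
  finally show ?case .
qed

subsection \<open>The symmetric difference with a fixed \<open>k\<close>-factor\<close>

lemma k_factors_degree_Diff:
  assumes "H \<in> k_factors k n" "H' \<in> k_factors k n" "v \<in> {1..n}"
  shows "degree (H - H') v = degree (H' - H) v"
proof -
  have "finite H" "finite H'" "degree H v = k" "degree H' v = k"
    using assms finite_graph unfolding k_factors_def is_k_factor_iff_degree by auto
  then show ?thesis using degree_Int_Diff[of H v H'] degree_Int_Diff[of H' v H]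
    by (simp add: Int_commute)
qed

lemma card_k_factors_symdiff_le:
  assumes Hs: "Hs \<in> k_factors k n"
  shows "card {H \<in> k_factors k n. card (symdiff H Hs) = 2 * t}
           \<le> (card Hs choose t) * odd_double_fact t"
proof -
  have HsE: "Hs \<subseteq> all_edges n"
    using Hs unfolding k_factors_def is_k_factor_def by auto
  define Ss where "Ss = {S. S \<subseteq> Hs \<and> card S = t}"
  define T where "T = Sigma Ss (\<lambda>S. graphs_with_degrees n (degree S))"
  have fin_Ss: "finite Ss" unfolding Ss_def using finite_graph[OF HsE] by simp
  have "inj_on (\<lambda>H. (Hs - H, H - Hs)) {H \<in> k_factors k n. card (symdiff H Hs) = 2 * t}"
  proof (rule inj_onI)
    fix H1 H2 assume "(Hs - H1, H1 - Hs) = (Hs - H2, H2 - Hs)"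
    then have "Hs - H1 = Hs - H2" "H1 - Hs = H2 - Hs" by auto
    then show "H1 = H2" by blast
  qed
  moreover have "(\<lambda>H. (Hs - H, H - Hs)) ` {H \<in> k_factors k n. card (symdiff H Hs) = 2 * t} \<subseteq> T"
  proof clarify
    fix H assume H: "H \<in> k_factors k n" "card (symdiff H Hs) = 2 * t"
    then have HE: "H \<subseteq> all_edges n" unfolding k_factors_def is_k_factor_def by auto
    have deg: "\<forall>v\<in>{1..n}. degree (H - Hs) v = degree (Hs - H) v"
      using k_factors_degree_Diff[OF H(1) Hs] by blast
    have "2 * card (H - Hs) = 2 * card (Hs - H)"
      using handshake[of "H - Hs" n] handshake[of "Hs - H" n] deg HE HsE
      by (metis (no_types, lifting) Diff_subset order_trans sum.cong)
    then have "card (H - Hs) = card (Hs - H)" by simp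
    moreover have "card (symdiff H Hs) = card (H - Hs) + card (Hs - H)"
      unfolding symdiff_def using finite_graph[OF HE] finite_graph[OF HsE]
      by (intro card_Un_disjoint) auto
    ultimately have "Hs - H \<in> Ss" using H(2) unfolding Ss_def by auto
    moreover have "H - Hs \<in> graphs_with_degrees n (degree (Hs - H))"
      unfolding graphs_with_degrees_def using HE deg by auto
    ultimately show "(Hs - H, H - Hs) \<in> T" unfolding T_def by simp
  qed
  moreover have "finite T" unfolding T_def using fin_Ss finite_graphs_with_degrees by simp
  ultimately have "card {H \<in> k_factors k n. card (symdiff H Hs) = 2 * t} \<le> card T"
    by (rule card_inj_on_le)
  also have "\<dots> = (\<Sum>S\<in>Ss. card (graphs_with_degrees n (degree S)))"
    unfolding T_def using fin_Ss finite_graphs_with_degrees by simp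
  also have "\<dots> \<le> (\<Sum>S\<in>Ss. odd_double_fact t)"
  proof (rule sum_mono)
    fix S assume "S \<in> Ss"
    then have "S \<subseteq> all_edges n" "card S = t" using HsE unfolding Ss_def by auto
    then have "(\<Sum>v\<in>{1..n}. degree S v) = 2 * t" using handshake[of S n] by simp
    then show "card (graphs_with_degrees n (degree S)) \<le> odd_double_fact t"
      by (rule card_graphs_with_degrees_le)
  qed
  also have "\<dots> = (card Hs choose t) * odd_double_fact t"
    unfolding Ss_def using n_subsets[OF finite_graph[OF HsE]] by simp
  finally show ?thesis .
qed

subsection \<open>The numerical bounds\<close>

lemma odd_double_fact_eq: "real (odd_double_fact t) = fact (2 * t) / (2 ^ t * fact t)"
proof (induction t)
  case (Suc t)
  have "fact (2 * Suc t) = (2 * (real t + 1)) * ((2 * real t + 1) * fact (2 * t))"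
    by (simp add: fact_Suc algebra_simps)
  moreover have "2 ^ Suc t * fact (Suc t) = (2 * (real t + 1)) * (2 ^ t * fact t)"
    by (simp add: fact_Suc algebra_simps)
  ultimately have "fact (2 * Suc t) / (2 ^ Suc t * fact (Suc t))
          = (2 * real t + 1) * (fact (2 * t) / (2 ^ t * fact t) :: real)"
    by (simp only: mult_divide_mult_cancel_left_if) simp
  moreover have "real (odd_double_fact (Suc t)) = (2 * real t + 1) * real (odd_double_fact t)"
    by (simp add: algebra_simps)
  ultimately show ?case using Suc.IH by simp
qed simp

lemma odd_double_fact_le: "odd_double_fact t \<le> 2 ^ t * fact t"
proof (induction t)
  case (Suc t)
  have "odd_double_fact (Suc t) \<le> (2 * t + 2) * (2 ^ t * fact t)"
    using mult_le_mono[OF _ Suc.IH, of "2 * t + 1" "2 * t + 2"] by simp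
  also have "\<dots> = 2 ^ Suc t * fact (Suc t)" by (simp add: algebra_simps)
  finally show ?case .
qed simp

lemma sum_lessThan_real: "(\<Sum>i<t. real i) = real t * (real t - 1) / 2"
  by (induction t) (auto simp: field_simps)

lemma choose_mult_pow_fact_le_exp:
  fixes m t :: nat
  assumes "t \<le> m"
  shows "real (m choose t) * 2 ^ t * fact t
           \<le> real (2 * m) ^ t * exp (- (real t * (real t - 1)) / real (2 * m))"
proof (cases "m = 0")
  case True then show ?thesis using assms by simp
next
  case False
  define N where "N = real (2 * m)"
  have N: "N > 0" using False by (simp add: N_def)
  have "real (m choose t) * 2 ^ t * fact t = 2 ^ t * (\<Prod>i<t. real m - real i)"
    by (simp add: binomial_gbinomial gbinomial_mult_fact' atLeast0LessThan)
  also have "\<dots> = (\<Prod>i<t. 2 * (real m - real i))"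
    by (simp only: prod.distrib prod_constant card_lessThan)
  also have "\<dots> = (\<Prod>i<t. N - 2 * real i)"
    by (simp add: N_def algebra_simps)
  also have "\<dots> \<le> (\<Prod>i<t. N * exp (- 2 * real i / N))"
  proof (rule prod_mono)
    fix i assume "i \<in> {..<t}"
    then have "2 * real i \<le> N" using assms by (simp add: N_def)
    moreover have "N - 2 * real i = N * (1 + - 2 * real i / N)"
      using N by (simp add: field_simps)
    moreover have "N * (1 + - 2 * real i / N) \<le> N * exp (- 2 * real i / N)"
      using N exp_ge_add_one_self[of "- 2 * real i / N"] by simp
    ultimately show "0 \<le> N - 2 * real i \<and> N - 2 * real i \<le> N * exp (- 2 * real i / N)"
      by simp
  qed
  also have "\<dots> = N ^ t * exp (- 2 * (\<Sum>i<t. real i) / N)"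
    by (simp add: prod.distrib exp_sum sum_divide_distrib sum_distrib_left)
  finally show ?thesis by (simp add: sum_lessThan_real N_def)
qed

theorem mainTheorem1:
  fixes k n t :: nat and Hs :: "nat set set"
  assumes "k \<ge> 1" and "even (k * n)"
    and "Hs \<in> k_factors k n"
    and "t \<le> k * n div 2"
  shows "real (card {H \<in> k_factors k n. card (symdiff H Hs) = 2 * t})
           \<le> real ((k * n div 2) choose t) * (fact (2 * t) / (2 ^ t * fact t))
       \<and> real ((k * n div 2) choose t) * (fact (2 * t) / (2 ^ t * fact t))
           \<le> real ((k * n div 2) choose t) * 2 ^ t * fact t
       \<and> real ((k * n div 2) choose t) * 2 ^ t * fact t
           \<le> real (k * n) ^ t * exp (- (real t * (real t - 1)) / real (k * n))"
proof (intro conjI)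
  have "card {H \<in> k_factors k n. card (symdiff H Hs) = 2 * t}
          \<le> ((k * n div 2) choose t) * odd_double_fact t"
    using card_k_factors_symdiff_le[OF assms(3)] card_k_factor[OF assms(3)] by simp
  then show "real (card {H \<in> k_factors k n. card (symdiff H Hs) = 2 * t})
           \<le> real ((k * n div 2) choose t) * (fact (2 * t) / (2 ^ t * fact t))"
    unfolding odd_double_fact_eq[symmetric] by (simp only: of_nat_mult[symmetric] of_nat_le_iff)
  have "real (odd_double_fact t) \<le> 2 ^ t * fact t"
    using of_nat_le_iff[THEN iffD2, OF odd_double_fact_le[of t]] by simp
  then have "fact (2 * t) / (2 ^ t * fact t) \<le> (2::real) ^ t * fact t"
    by (simp only: odd_double_fact_eq)
  then show "real ((k * n div 2) choose t) * (fact (2 * t) / (2 ^ t * fact t))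
           \<le> real ((k * n div 2) choose t) * 2 ^ t * fact t"
    unfolding mult.assoc by (rule mult_left_mono) simp
  obtain m where "k * n = 2 * m" using assms(2) by (rule evenE)
  then show "real ((k * n div 2) choose t) * 2 ^ t * fact t
           \<le> real (k * n) ^ t * exp (- (real t * (real t - 1)) / real (k * n))"
    using choose_mult_pow_fact_le_exp[of t m] assms(4) by simp
qed

end
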